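(* Let $0\le\alpha<n$, $m$ a nonnegative integer, $0<\eta\le1$, $0<\delta<\min\{\eta,(n-\alpha)/m\}$, $1\le r\le\infty$, $\tilde\alpha=m\delta+\alpha$, $\tilde\delta\le\delta$. Let $(w,v)$ be weights such that $v^{r'}$ satisfies a doubling condition. If there is $C$ such that for every ball $B$ with center $x_B$ $$|B|^{\frac{\delta-\tilde\delta}{n}}\Big(\int_{\mathbb{R}^n\setminus B}\frac{v^{r'}(y)}{|x_B-y|^{r'(n-\tilde\alpha+\delta)}}dy\Big)^{1/r'}\le C\frac{w(B)}{|B|},$$ then there is $C'$ such that for every ball $B$ $$|B|^{\frac{\tilde\alpha-\tilde\delta}{n}-\frac1r}\Big(\frac{1}{|B|}\int_Bv^{r'}(y)\,dy\Big)^{1/r'}\le C'\frac{w(B)}{|B|}.$$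
   Context: A weight is a nonnegative locally integrable function; $w(B)=\int_Bw$; $r'$ is the conjugate exponent of $r$. A weight $u$ is doubling if $\int_{2B}u\le C\int_Bu$ for all balls $B$, $2B$ being the concentric ball of twice the radius. If $m=0$, $(n-\alpha)/m$ is read as $+\infty$. *)

theory Defs
  imports "HOL-Analysis.Analysis" "HOL-Probability.Essential_Supremum"
begin

definition weight :: "('a::euclidean_space \<Rightarrow> real) \<Rightarrow> bool" where
  "weight w \<longleftrightarrow> (\<forall>x. 0 \<le> w x) \<and> w \<in> borel_measurable lebesgue \<and>
     (\<forall>K. compact K \<longrightarrow> set_integrable lebesgue K w)"

definition enn_powr :: "ennreal \<Rightarrow> real \<Rightarrow> ennreal" where
  "enn_powr x p = (if x = \<infinity> then \<infinity> else ennreal (enn2real x powr p))"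

definition conj_exp :: "ereal \<Rightarrow> ereal" where
  "conj_exp r = (if r = 1 then \<infinity> else if r = \<infinity> then 1
                 else ereal (real_of_ereal r / (real_of_ereal r - 1)))"

definition inv_exp :: "ereal \<Rightarrow> real" where
  "inv_exp r = (if r = \<infinity> then 0 else 1 / real_of_ereal r)"

definition Lnorm_on :: "ereal \<Rightarrow> 'a::euclidean_space set \<Rightarrow> ('a \<Rightarrow> real) \<Rightarrow> ennreal" where
  "Lnorm_on p S f = (if p = \<infinity> then e2ennreal (esssup lebesgue (\<lambda>y. ereal (indicator S y * f y)))
     else enn_powr (\<integral>\<^sup>+ y\<in>S. ennreal (f y powr real_of_ereal p) \<partial>lebesgue) (1 / real_of_ereal p))"

definition Lavg_on :: "ereal \<Rightarrow> 'a::euclidean_space set \<Rightarrow> ('a \<Rightarrow> real) \<Rightarrow> ennreal" where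
  "Lavg_on p S f = (if p = \<infinity> then e2ennreal (esssup lebesgue (\<lambda>y. ereal (indicator S y * f y)))
     else enn_powr ((\<integral>\<^sup>+ y\<in>S. ennreal (f y powr real_of_ereal p) \<partial>lebesgue)
                      / ennreal (measure lebesgue S)) (1 / real_of_ereal p))"

definition doubling :: "('a::euclidean_space \<Rightarrow> real) \<Rightarrow> bool" where
  "doubling u \<longleftrightarrow> (\<exists>C::real. \<forall>x \<rho>. \<rho> > 0 \<longrightarrow>
      (\<integral>\<^sup>+ y\<in>ball x (2*\<rho>). ennreal (u y) \<partial>lebesgue) \<le> ennreal C * (\<integral>\<^sup>+ y\<in>ball x \<rho>. ennreal (u y) \<partial>lebesgue))"

definition doubling_pow :: "ereal \<Rightarrow> ('a::euclidean_space \<Rightarrow> real) \<Rightarrow> bool" where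
  "doubling_pow p v \<longleftrightarrow> (if p = \<infinity> then
      (\<exists>C::real. \<forall>x \<rho>. \<rho> > 0 \<longrightarrow> Lnorm_on \<infinity> (ball x (2*\<rho>)) v \<le> ennreal C * Lnorm_on \<infinity> (ball x \<rho>) v)
    else doubling (\<lambda>y. v y powr real_of_ereal p))"

end

theory Submission
  imports Defs
begin

text \<open>Write s = n - \<alpha>t + \<delta> for the exponent of the kernel in the hypothesis, and let
  B = B(x, \<rho>). The annulus 2B - B contains the ball B' of radius \<rho>/2 centred at distance
  3\<rho>/2 from x, and B lies in 8B'; so three applications of the doubling property of v^{r'}
  bound the L^{r'} norm of v on B by a multiple of its norm on the annulus. There |x - y| < 2\<rho>,
  so that norm is at most (2\<rho>)^s times the L^{r'} norm of v(y)/|x - y|^s off B, which the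
  hypothesis controls. Since \<rho>^n is proportional to |B| and 1/r + 1/r' = 1, the powers of
  \<rho> and |B| combine into exactly the factor |B|^{(\<delta> - \<delta>t)/n} of the hypothesis.\<close>

lemma enn_powr_mono:
  assumes "X \<le> Y" "0 < q"
  shows "enn_powr X q \<le> enn_powr Y q"
proof (cases "Y = \<infinity>")
  case False
  then have "X \<noteq> \<infinity>" using assms top.extremum_unique by fastforce
  then show ?thesis unfolding enn_powr_def using False assms
    by (auto intro!: ennreal_leI powr_mono2 enn2real_mono simp: less_top)
qed (simp add: enn_powr_def)

lemma enn_powr_cmult:
  assumes "0 \<le> c" "0 < q"
  shows "enn_powr (ennreal c * X) q = ennreal (c powr q) * enn_powr X q"
proof (cases "c = 0 \<or> X = \<infinity>")
  case True
  then show ?thesis using assms by (auto simp: enn_powr_def ennreal_mult_top)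
next
  case False
  then have "ennreal c * X \<noteq> \<infinity>" by (simp add: ennreal_mult_eq_top_iff)
  then show ?thesis using False assms
    by (simp add: enn_powr_def enn2real_mult powr_mult ennreal_mult')
qed

lemma e2ennreal_cmult:
  assumes "0 < c"
  shows "e2ennreal (ereal c * e) = ennreal c * e2ennreal e"
  using assms by (cases e) (simp_all add: ennreal_mult' ennreal_mult_top e2ennreal_neg)

lemma real_of_ereal_ge_1: "1 \<le> P \<Longrightarrow> P \<noteq> \<infinity> \<Longrightarrow> 1 \<le> real_of_ereal P"
  by (cases P) auto

lemma conj_exp_ge_1:
  assumes "1 \<le> r"
  shows "1 \<le> conj_exp r"
  using assms by (cases r) (auto simp: conj_exp_def field_simps)

lemma inv_exp_add_inv_exp_conj_exp:
  assumes "1 \<le> r"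
  shows "inv_exp r + inv_exp (conj_exp r) = 1"
  using assms by (cases r) (auto simp: conj_exp_def inv_exp_def field_simps)

lemma Lnorm_on_mono:
  fixes f g :: "'a::euclidean_space \<Rightarrow> real"
  assumes "1 \<le> P" "S \<subseteq> T"
    and "\<And>y. y \<in> S \<Longrightarrow> f y \<le> g y" "\<And>y. y \<in> S \<Longrightarrow> 0 \<le> f y" "\<And>y. 0 \<le> g y"
    and "f \<in> borel_measurable lebesgue" "S \<in> sets lebesgue"
  shows "Lnorm_on P S f \<le> Lnorm_on P T g"
proof (cases "P = \<infinity>")
  case True
  have "(\<lambda>y. ereal (indicator S y * f y)) \<in> borel_measurable lebesgue"
    using assms by measurable
  then have "esssup lebesgue (\<lambda>y. ereal (indicator S y * f y)) \<le>
        esssup lebesgue (\<lambda>y. ereal (indicator T y * g y))"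
    by (rule esssup_mono) (use assms in \<open>auto simp: indicator_def\<close>)
  then show ?thesis using True unfolding Lnorm_on_def by (simp add: e2ennreal_mono)
next
  case False
  then have "0 < real_of_ereal P" using real_of_ereal_ge_1 assms(1) by fastforce
  with False assms show ?thesis unfolding Lnorm_on_def
    by (auto simp: indicator_def intro!: enn_powr_mono nn_integral_mono ennreal_leI powr_mono2)
qed

lemma Lnorm_on_cmult:
  fixes f :: "'a::euclidean_space \<Rightarrow> real"
  assumes "1 \<le> P" "0 < c" "\<And>y. 0 \<le> f y"
    and "f \<in> borel_measurable lebesgue" "S \<in> sets lebesgue"
  shows "Lnorm_on P S (\<lambda>y. c * f y) = ennreal c * Lnorm_on P S f"
proof (cases "P = \<infinity>")
  case True
  have "esssup lebesgue (\<lambda>y. ereal (indicator S y * (c * f y))) =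
        esssup lebesgue (\<lambda>y. ereal c * ereal (indicator S y * f y))"
    by (simp add: algebra_simps)
  also have "\<dots> = ereal c * esssup lebesgue (\<lambda>y. ereal (indicator S y * f y))"
    using \<open>0 < c\<close> by (rule esssup_cmult)
  finally show ?thesis
    using True \<open>0 < c\<close> unfolding Lnorm_on_def by (simp add: e2ennreal_cmult)
next
  case False
  define p where "p = real_of_ereal P"
  have "0 < p" using real_of_ereal_ge_1 assms(1) False unfolding p_def by fastforce
  have "(\<integral>\<^sup>+ y\<in>S. ennreal ((c * f y) powr p) \<partial>lebesgue) =
        (\<integral>\<^sup>+ y. ennreal (c powr p) * (ennreal (f y powr p) * indicator S y) \<partial>lebesgue)"
    using assms by (intro nn_integral_cong) (simp add: powr_mult ennreal_mult mult.assoc)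
  also have "\<dots> = ennreal (c powr p) * (\<integral>\<^sup>+ y\<in>S. ennreal (f y powr p) \<partial>lebesgue)"
    by (rule nn_integral_cmult) (use assms in measurable)
  finally show ?thesis
    using False \<open>0 < c\<close> \<open>0 < p\<close> unfolding Lnorm_on_def p_def[symmetric]
    by (simp add: enn_powr_cmult powr_powr)
qed

lemma Lavg_on_eq_Lnorm_on:
  fixes f :: "'a::euclidean_space \<Rightarrow> real"
  assumes "1 \<le> P" "0 < measure lebesgue S"
  shows "Lavg_on P S f = ennreal (measure lebesgue S powr - inv_exp P) * Lnorm_on P S f"
proof (cases "P = \<infinity>")
  case False
  define p where "p = real_of_ereal P"
  define \<mu> where "\<mu> = measure lebesgue S"
  have "0 < p" using real_of_ereal_ge_1 assms(1) False unfolding p_def by fastforce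
  have "X / ennreal \<mu> = ennreal (inverse \<mu>) * X" for X
    using assms unfolding \<mu>_def by (simp add: divide_ennreal_def inverse_ennreal mult.commute)
  then have "Lavg_on P S f =
      enn_powr (ennreal (inverse \<mu>) * (\<integral>\<^sup>+ y\<in>S. ennreal (f y powr p) \<partial>lebesgue)) (1 / p)"
    using False unfolding Lavg_on_def p_def[symmetric] \<mu>_def[symmetric] by simp
  also have "\<dots> = ennreal (inverse \<mu> powr (1 / p)) * Lnorm_on P S f"
    using False \<open>0 < p\<close> assms unfolding Lnorm_on_def p_def[symmetric] \<mu>_def
    by (simp add: enn_powr_cmult)
  also have "inverse \<mu> powr (1 / p) = \<mu> powr - inv_exp P"
    using False assms unfolding p_def \<mu>_def inv_exp_def by (simp add: powr_minus inverse_powr)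
  finally show ?thesis unfolding \<mu>_def .
qed (use assms in \<open>simp add: Lavg_on_def Lnorm_on_def inv_exp_def\<close>)

lemma doubling_pow_imp_Lnorm_on_doubling:
  fixes v :: "'a::euclidean_space \<Rightarrow> real"
  assumes "1 \<le> P" "doubling_pow P v"
  obtains D where "0 \<le> D"
    "\<And>x \<rho>. 0 < \<rho> \<Longrightarrow> Lnorm_on P (ball x (2 * \<rho>)) v \<le> ennreal D * Lnorm_on P (ball x \<rho>) v"
proof (cases "P = \<infinity>")
  case True
  then obtain C :: real where "\<And>x \<rho>. 0 < \<rho> \<Longrightarrow>
      Lnorm_on P (ball x (2 * \<rho>)) v \<le> ennreal C * Lnorm_on P (ball x \<rho>) v"
    using assms(2) unfolding doubling_pow_def by auto
  then show ?thesis using that[of "max 0 C"] by (simp add: ennreal_max_0)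
next
  case False
  define p where "p = real_of_ereal P"
  have "0 < p" using real_of_ereal_ge_1 assms(1) False unfolding p_def by fastforce
  obtain C :: real where C: "\<And>x \<rho>. 0 < \<rho> \<Longrightarrow>
      (\<integral>\<^sup>+ y\<in>ball x (2 * \<rho>). ennreal (v y powr p) \<partial>lebesgue)
        \<le> ennreal (max 0 C) * (\<integral>\<^sup>+ y\<in>ball x \<rho>. ennreal (v y powr p) \<partial>lebesgue)"
    using assms(2) False unfolding doubling_pow_def doubling_def p_def ennreal_max_0 by auto
  have doubling: "Lnorm_on P (ball x (2 * \<rho>)) v \<le> ennreal (max 0 C powr (1 / p)) * Lnorm_on P (ball x \<rho>) v"
    if "0 < \<rho>" for x \<rho>
    using enn_powr_mono[OF C[OF that] divide_pos_pos[OF zero_less_one \<open>0 < p\<close>]] \<open>0 < p\<close> False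
    unfolding Lnorm_on_def p_def[symmetric] by (simp add: enn_powr_cmult)
  show ?thesis using that[OF powr_ge_zero doubling] .
qed

lemma doubling_iterate:
  fixes N :: "'a::metric_space set \<Rightarrow> ennreal"
  assumes "\<And>x \<rho>. 0 < \<rho> \<Longrightarrow> N (ball x (2 * \<rho>)) \<le> ennreal D * N (ball x \<rho>)"
    and "0 \<le> D" "0 < \<rho>"
  shows "N (ball x (2 ^ k * \<rho>)) \<le> ennreal (D ^ k) * N (ball x \<rho>)"
proof (induction k)
  case (Suc k)
  have "N (ball x (2 ^ Suc k * \<rho>)) \<le> ennreal D * N (ball x (2 ^ k * \<rho>))"
    using assms(1)[of "2 ^ k * \<rho>" x] \<open>0 < \<rho>\<close> by (simp add: mult.assoc)
  also have "\<dots> \<le> ennreal D * (ennreal (D ^ k) * N (ball x \<rho>))"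
    using Suc.IH by (rule mult_left_mono) simp
  finally show ?case using \<open>0 \<le> D\<close> by (simp add: ennreal_mult mult.assoc)
qed simp

lemma doubling_ball_le_annulus:
  fixes N :: "'a::euclidean_space set \<Rightarrow> ennreal"
  assumes mono: "\<And>S T. S \<in> sets lebesgue \<Longrightarrow> S \<subseteq> T \<Longrightarrow> N S \<le> N T"
    and doubling: "\<And>x \<rho>. 0 < \<rho> \<Longrightarrow> N (ball x (2 * \<rho>)) \<le> ennreal D * N (ball x \<rho>)"
    and "0 \<le> D" "0 < \<rho>"
  shows "N (ball x \<rho>) \<le> ennreal (D ^ 3) * N (ball x (2 * \<rho>) - ball x \<rho>)"
proof -
  obtain e :: 'a where "e \<in> Basis" using nonempty_Basis by blast
  define x' where "x' = x + (3 * \<rho> / 2) *\<^sub>R e"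
  have "dist x x' = 3 * \<rho> / 2"
    using \<open>e \<in> Basis\<close> \<open>0 < \<rho>\<close> unfolding x'_def dist_norm by simp
  then have inner: "ball x \<rho> \<subseteq> ball x' (2 ^ 3 * (\<rho> / 2))"
    and outer: "ball x' (\<rho> / 2) \<subseteq> ball x (2 * \<rho>) - ball x \<rho>"
    unfolding subset_iff mem_ball Diff_iff power3_eq_cube by metric+
  have "N (ball x \<rho>) \<le> N (ball x' (2 ^ 3 * (\<rho> / 2)))"
    using mono[OF _ inner] by simp
  also have "\<dots> \<le> ennreal (D ^ 3) * N (ball x' (\<rho> / 2))"
    using doubling \<open>0 \<le> D\<close> \<open>0 < \<rho>\<close> by (intro doubling_iterate) auto
  also have "\<dots> \<le> ennreal (D ^ 3) * N (ball x (2 * \<rho>) - ball x \<rho>)"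
    using mono[OF _ outer] by (intro mult_left_mono) auto
  finally show ?thesis .
qed

lemma Lnorm_on_ball_le_tail:
  fixes v :: "'a::euclidean_space \<Rightarrow> real"
  assumes "1 \<le> P" "0 \<le> D"
    and doubling: "\<And>x \<rho>. 0 < \<rho> \<Longrightarrow>
      Lnorm_on P (ball x (2 * \<rho>)) v \<le> ennreal D * Lnorm_on P (ball x \<rho>) v"
    and v: "v \<in> borel_measurable lebesgue" "\<And>y. 0 \<le> v y"
    and "0 \<le> s" "0 < \<rho>"
  shows "Lnorm_on P (ball x \<rho>) v
    \<le> ennreal (D ^ 3 * (2 * \<rho>) powr s) * Lnorm_on P (- ball x \<rho>) (\<lambda>y. v y / dist x y powr s)"
proof -
  define A where "A = ball x (2 * \<rho>) - ball x \<rho>"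
  define c where "c = (2 * \<rho>) powr - s"
  have "0 < c" "A \<in> sets lebesgue" using \<open>0 < \<rho>\<close> unfolding c_def A_def by simp_all
  have "Lnorm_on P (ball x \<rho>) v \<le> ennreal (D ^ 3) * Lnorm_on P A v"
    unfolding A_def using doubling \<open>0 \<le> D\<close> \<open>0 < \<rho>\<close>
    by (intro doubling_ball_le_annulus Lnorm_on_mono) (use assms in auto)
  also have "Lnorm_on P A v = ennreal ((2 * \<rho>) powr s) * Lnorm_on P A (\<lambda>y. c * v y)"
    using Lnorm_on_cmult[OF \<open>1 \<le> P\<close> \<open>0 < c\<close> v(2) v(1) \<open>A \<in> sets lebesgue\<close>] \<open>0 < \<rho>\<close>
    by (simp add: c_def powr_minus flip: mult.assoc ennreal_mult')
  also have "Lnorm_on P A (\<lambda>y. c * v y) \<le> Lnorm_on P (- ball x \<rho>) (\<lambda>y. v y / dist x y powr s)"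
  proof (rule Lnorm_on_mono[OF \<open>1 \<le> P\<close>])
    fix y assume "y \<in> A"
    then have "0 < dist x y" "dist x y \<le> 2 * \<rho>" using \<open>0 < \<rho>\<close> unfolding A_def by auto
    then have "v y / (2 * \<rho>) powr s \<le> v y / dist x y powr s"
      using v(2)[of y] \<open>0 \<le> s\<close> by (intro divide_left_mono powr_mono2 mult_pos_pos) auto
    then show "c * v y \<le> v y / dist x y powr s"
      unfolding c_def by (simp add: powr_minus divide_inverse mult.commute)
  qed (use \<open>0 < c\<close> v \<open>A \<in> sets lebesgue\<close> in \<open>auto simp: A_def\<close>)
  finally show ?thesis
    using \<open>0 \<le> D\<close> by (simp add: ennreal_mult mult.assoc mult_left_mono)
qed

lemma powr_radius_eq_measure_ball:
  fixes x :: "'a::euclidean_space"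
  assumes "0 < \<rho>"
  shows "\<rho> powr t = measure lebesgue (ball (0::'a) 1) powr (- t / DIM('a)) *
    measure lebesgue (ball x \<rho>) powr (t / DIM('a))"
proof -
  define V where "V = measure lebesgue (ball (0::'a) 1)"
  have "0 < V" unfolding V_def by (simp add: content_ball_pos)
  have "measure lebesgue (ball x \<rho>) = V * \<rho> powr DIM('a)"
    using content_ball_conv_unit_ball[of \<rho> x] assms unfolding V_def by (simp add: powr_realpow)
  then show ?thesis
    using assms \<open>0 < V\<close> unfolding V_def[symmetric]
    by (simp add: powr_mult powr_powr powr_minus)
qed

lemma Lavg_on_ball_le_tail:
  fixes v :: "'a::euclidean_space \<Rightarrow> real"
  assumes "1 \<le> P" "0 \<le> D"
    and "\<And>x \<rho>. 0 < \<rho> \<Longrightarrow>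
      Lnorm_on P (ball x (2 * \<rho>)) v \<le> ennreal D * Lnorm_on P (ball x \<rho>) v"
    and "v \<in> borel_measurable lebesgue" "\<And>y. 0 \<le> v y"
    and "0 \<le> s" "0 < \<rho>"
  shows "ennreal (measure lebesgue (ball x \<rho>) powr a) * Lavg_on P (ball x \<rho>) v
    \<le> ennreal (D ^ 3 * 2 powr s * measure lebesgue (ball (0::'a) 1) powr (- s / DIM('a))) *
      (ennreal (measure lebesgue (ball x \<rho>) powr (a - inv_exp P + s / DIM('a))) *
       Lnorm_on P (- ball x \<rho>) (\<lambda>y. v y / dist x y powr s))"
proof -
  define n where "n = real DIM('a)"
  define \<mu> where "\<mu> = measure lebesgue (ball x \<rho>)"
  define V where "V = measure lebesgue (ball (0::'a) 1)"
  have "0 < \<mu>"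
    using \<open>0 < \<rho>\<close> content_ball_pos unfolding \<mu>_def by auto
  have scaling: "\<mu> powr a * \<mu> powr - inv_exp P * (D ^ 3 * (2 * \<rho>) powr s)
      = D ^ 3 * 2 powr s * V powr (- s / n) * \<mu> powr (a - inv_exp P + s / n)"
  proof -
    have "(2 * \<rho>) powr s = 2 powr s * V powr (- s / n) * \<mu> powr (s / n)"
      using powr_radius_eq_measure_ball[OF \<open>0 < \<rho>\<close>, of s x] \<open>0 < \<rho>\<close>
      unfolding \<mu>_def[symmetric] V_def[symmetric] n_def[symmetric] by (simp add: powr_mult)
    moreover have "\<mu> powr (a - inv_exp P + s / n) = \<mu> powr a * \<mu> powr - inv_exp P * \<mu> powr (s / n)"
      by (simp only: diff_conv_add_uminus powr_add)
    ultimately show ?thesis by simp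
  qed
  have "Lavg_on P (ball x \<rho>) v = ennreal (\<mu> powr - inv_exp P) * Lnorm_on P (ball x \<rho>) v"
    using Lavg_on_eq_Lnorm_on[OF \<open>1 \<le> P\<close>] \<open>0 < \<mu>\<close> unfolding \<mu>_def by blast
  then have "ennreal (\<mu> powr a) * Lavg_on P (ball x \<rho>) v
      = ennreal (\<mu> powr a * \<mu> powr - inv_exp P) * Lnorm_on P (ball x \<rho>) v"
    by (simp add: ennreal_mult mult.assoc)
  also have "\<dots> \<le> ennreal (\<mu> powr a * \<mu> powr - inv_exp P) *
      (ennreal (D ^ 3 * (2 * \<rho>) powr s) * Lnorm_on P (- ball x \<rho>) (\<lambda>y. v y / dist x y powr s))"
    using assms by (intro mult_left_mono Lnorm_on_ball_le_tail) auto
  also have "\<dots> = ennreal (\<mu> powr a * \<mu> powr - inv_exp P * (D ^ 3 * (2 * \<rho>) powr s)) *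
      Lnorm_on P (- ball x \<rho>) (\<lambda>y. v y / dist x y powr s)"
    using \<open>0 \<le> D\<close> by (simp add: ennreal_mult mult.assoc)
  also have "\<dots> = ennreal (D ^ 3 * 2 powr s * V powr (- s / n)) *
      (ennreal (\<mu> powr (a - inv_exp P + s / n)) * Lnorm_on P (- ball x \<rho>) (\<lambda>y. v y / dist x y powr s))"
    unfolding scaling using \<open>0 \<le> D\<close> by (simp add: ennreal_mult mult.assoc)
  finally show ?thesis unfolding \<mu>_def V_def n_def .
qed

lemma Lavg_on_ball_bound_if_tail_bound:
  fixes v :: "'a::euclidean_space \<Rightarrow> real" and W :: "'a \<Rightarrow> real \<Rightarrow> ennreal"
  assumes "1 \<le> P" "doubling_pow P v" "v \<in> borel_measurable lebesgue" "\<And>y. 0 \<le> v y" "0 \<le> s"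
    and tail: "\<And>x \<rho>. 0 < \<rho> \<Longrightarrow>
      ennreal (measure lebesgue (ball x \<rho>) powr e) * Lnorm_on P (- ball x \<rho>) (\<lambda>y. v y / dist x y powr s)
      \<le> ennreal C * W x \<rho>"
  shows "\<exists>C'. \<forall>x \<rho>. 0 < \<rho> \<longrightarrow>
    ennreal (measure lebesgue (ball x \<rho>) powr (e + inv_exp P - s / DIM('a))) * Lavg_on P (ball x \<rho>) v
    \<le> ennreal C' * W x \<rho>"
proof -
  obtain D where "0 \<le> D" and doubling: "\<And>x \<rho>. 0 < \<rho> \<Longrightarrow>
      Lnorm_on P (ball x (2 * \<rho>)) v \<le> ennreal D * Lnorm_on P (ball x \<rho>) v"
    using doubling_pow_imp_Lnorm_on_doubling[OF assms(1,2)] by blast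
  define K where "K = D ^ 3 * 2 powr s * measure lebesgue (ball (0::'a) 1) powr (- s / DIM('a))"
  have "0 \<le> K" unfolding K_def using \<open>0 \<le> D\<close> by simp
  have "ennreal (measure lebesgue (ball x \<rho>) powr (e + inv_exp P - s / DIM('a))) * Lavg_on P (ball x \<rho>) v
      \<le> ennreal (K * C) * W x \<rho>" if "0 < \<rho>" for x \<rho>
  proof -
    have "ennreal (measure lebesgue (ball x \<rho>) powr (e + inv_exp P - s / DIM('a))) * Lavg_on P (ball x \<rho>) v
        \<le> ennreal K * (ennreal (measure lebesgue (ball x \<rho>) powr e) *
          Lnorm_on P (- ball x \<rho>) (\<lambda>y. v y / dist x y powr s))"
      using Lavg_on_ball_le_tail[OF \<open>1 \<le> P\<close> \<open>0 \<le> D\<close> doubling assms(3-5) \<open>0 < \<rho>\<close>,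
          where x = x and a = "e + inv_exp P - s / DIM('a)"]
      unfolding K_def by simp
    also have "\<dots> \<le> ennreal K * (ennreal C * W x \<rho>)"
      using tail[OF \<open>0 < \<rho>\<close>] by (rule mult_left_mono) simp
    finally show ?thesis using \<open>0 \<le> K\<close> by (simp add: ennreal_mult' mult.assoc)
  qed
  then show ?thesis by blast
qed

theorem lemma3p5:
  fixes w v :: "'a::euclidean_space \<Rightarrow> real"
    and \<alpha> \<eta> \<delta> \<delta>t :: real and m :: nat and r :: ereal
  defines "n \<equiv> real DIM('a)"
  defines "\<alpha>t \<equiv> real m * \<delta> + \<alpha>"
  defines "r' \<equiv> conj_exp r"
  assumes "0 \<le> \<alpha>" "\<alpha> < n"
    and "0 < \<eta>" "\<eta> \<le> 1"
    and "0 < \<delta>" "\<delta> < \<eta>" "m > 0 \<longrightarrow> \<delta> < (n - \<alpha>) / real m"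
    and "1 \<le> r"
    and "\<delta>t \<le> \<delta>"
    and "weight w" "weight v"
    and "doubling_pow r' v"
    and "\<exists>C::real. \<forall>x \<rho>. \<rho> > 0 \<longrightarrow>
           ennreal (measure lebesgue (ball x \<rho>) powr ((\<delta> - \<delta>t) / n)) *
           Lnorm_on r' (- ball x \<rho>) (\<lambda>y. v y / dist x y powr (n - \<alpha>t + \<delta>))
           \<le> ennreal C * (\<integral>\<^sup>+ y\<in>ball x \<rho>. ennreal (w y) \<partial>lebesgue) / ennreal (measure lebesgue (ball x \<rho>))"
  shows "\<exists>C'::real. \<forall>x \<rho>. \<rho> > 0 \<longrightarrow>
           ennreal (measure lebesgue (ball x \<rho>) powr ((\<alpha>t - \<delta>t) / n - inv_exp r)) *
           Lavg_on r' (ball x \<rho>) v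
           \<le> ennreal C' * (\<integral>\<^sup>+ y\<in>ball x \<rho>. ennreal (w y) \<partial>lebesgue) / ennreal (measure lebesgue (ball x \<rho>))"
proof -
  have "0 < n - \<alpha>t + \<delta>"
  proof (cases "m = 0")
    case False
    then have "real m * \<delta> < n - \<alpha>" using \<open>m > 0 \<longrightarrow> \<delta> < (n - \<alpha>) / real m\<close> by (simp add: pos_less_divide_eq mult.commute)
    then show ?thesis unfolding \<alpha>t_def using \<open>0 < \<delta>\<close> by simp
  qed (use \<open>\<alpha> < n\<close> \<open>0 < \<delta>\<close> in \<open>simp add: \<alpha>t_def\<close>)
  have inv_exp_r': "inv_exp r' = 1 - inv_exp r"
    using inv_exp_add_inv_exp_conj_exp[OF \<open>1 \<le> r\<close>] unfolding r'_def by simp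
  have exponent: "(\<delta> - \<delta>t) / n + inv_exp r' - (n - \<alpha>t + \<delta>) / n = (\<alpha>t - \<delta>t) / n - inv_exp r"
    unfolding inv_exp_r' n_def by (simp add: field_simps)
  have "1 \<le> r'" unfolding r'_def using \<open>1 \<le> r\<close> by (rule conj_exp_ge_1)
  have v: "v \<in> borel_measurable lebesgue" "\<And>y. 0 \<le> v y"
    using \<open>weight v\<close> unfolding weight_def by auto
  from Lavg_on_ball_bound_if_tail_bound[OF \<open>1 \<le> r'\<close> \<open>doubling_pow r' v\<close> v
      less_imp_le[OF \<open>0 < n - \<alpha>t + \<delta>\<close>],
      where e = "(\<delta> - \<delta>t) / n" and W = "\<lambda>x \<rho>. (\<integral>\<^sup>+ y\<in>ball x \<rho>. ennreal (w y) \<partial>lebesgue) /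
         ennreal (measure lebesgue (ball x \<rho>))"]
  show ?thesis
    using assms(16) unfolding exponent n_def[symmetric] by (simp add: ennreal_times_divide) blast
qed

end
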